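(* Let $\hat{\mathfrak{so}}$ be the extended Schr\"odinger-Virasoro algebra over $\mathbb{C}$ and, for $g\in\frac12\mathbb{Z}$, let $\Delta_g(\hat{\mathfrak{so}})$ be the space of $\frac12$-derivations of $\hat{\mathfrak{so}}$ of degree $g$. Then $\Delta_0(\hat{\mathfrak{so}})=\langle \mathrm{Id}\rangle$ (the scalar multiples of the identity map) and $\Delta_j(\hat{\mathfrak{so}})=0$ for every $j\in\mathbb{Z}\setminus\{0\}$.
   Context: The extended Schr\"odinger-Virasoro algebra $\hat{\mathfrak{so}}$ is the complex Lie algebra with basis $\{L_n,M_n,N_n,Y_{n+\frac12},C_L,C_{LN},C_N\mid n\in\mathbb{Z}\}$ and brackets (all others zero, $C_L,C_{LN},C_N$ central): $[L_m,L_n]=(n-m)L_{m+n}+\delta_{m+n,0}\frac{m^3-m}{12}C_L$, $[L_m,M_n]=nM_{m+n}$, $[L_m,N_n]=nN_{m+n}+\delta_{m+n,0}(m^2-m)C_{LN}$, $[N_m,M_n]=2M_{m+n}$, $[L_m,Y_{n+\frac12}]=(n+\frac{1-m}{2})Y_{m+n+\frac12}$, $[N_m,Y_{n+\frac12}]=Y_{m+n+\frac12}$, $[Y_{m+\frac12},Y_{n+\frac12}]=(m-n)M_{m+n+1}$, $[N_m,N_n]=n\delta_{m+n,0}C_N$, for all $m,n\in\mathbb{Z}$. It is $\frac12\mathbb{Z}$-graded by $\hat{\mathfrak{so}}_0=\langle L_0,M_0,N_0,C_L,C_{LN},C_N\rangle$, $\hat{\mathfrak{so}}_n=\langle L_n,M_n,N_n\rangle$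 for $n\in\mathbb{Z}\setminus\{0\}$, $\hat{\mathfrak{so}}_{n+\frac12}=\langle Y_{n+\frac12}\rangle$. A $\frac12$-derivation of a Lie algebra $L$ is a linear map $\varphi:L\to L$ with $\varphi([x,y])=\frac12([\varphi(x),y]+[x,\varphi(y)])$ for all $x,y$. A $\frac12$-derivation $\varphi$ has degree $g$ if $\varphi(\hat{\mathfrak{so}}_h)\subseteq\hat{\mathfrak{so}}_{g+h}$ for all $h\in\frac12\mathbb{Z}$. *)

theory Defs
  imports Complex_Main
begin

text \<open>Basis of the extended Schroedinger-Virasoro algebra.
  SL n = L_n, SM n = M_n, SN n = N_n, SY n = Y_{n+1/2}, and the central elements.\<close>
datatype sob = SL int | SM int | SN int | SY int | CL | CLN | CN

definition sv :: "sob \<Rightarrow> complex \<Rightarrow> sob \<Rightarrow> complex" where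
  "sv b c = (\<lambda>z. if z = b then c else 0)"

fun br :: "sob \<Rightarrow> sob \<Rightarrow> sob \<Rightarrow> complex" where
  "br (SL m) (SL n) = (\<lambda>z. (if z = SL (m+n) then of_int (n-m) else 0)
      + (if z = CL \<and> m + n = 0 then (of_int m ^ 3 - of_int m) / 12 else 0))"
| "br (SL m) (SM n) = sv (SM (m+n)) (of_int n)"
| "br (SM n) (SL m) = sv (SM (m+n)) (- of_int n)"
| "br (SL m) (SN n) = (\<lambda>z. (if z = SN (m+n) then of_int n else 0)
      + (if z = CLN \<and> m + n = 0 then of_int m ^ 2 - of_int m else 0))"
| "br (SN n) (SL m) = (\<lambda>z. - ((if z = SN (m+n) then of_int n else 0)
      + (if z = CLN \<and> m + n = 0 then of_int m ^ 2 - of_int m else 0)))"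
| "br (SN m) (SM n) = sv (SM (m+n)) 2"
| "br (SM n) (SN m) = sv (SM (m+n)) (-2)"
| "br (SL m) (SY n) = sv (SY (m+n)) (of_int n + (1 - of_int m) / 2)"
| "br (SY n) (SL m) = sv (SY (m+n)) (- (of_int n + (1 - of_int m) / 2))"
| "br (SN m) (SY n) = sv (SY (m+n)) 1"
| "br (SY n) (SN m) = sv (SY (m+n)) (-1)"
| "br (SY m) (SY n) = sv (SM (m+n+1)) (of_int (m-n))"
| "br (SN m) (SN n) = sv CN (if m + n = 0 then of_int n else 0)"
| "br _ _ = (\<lambda>z. 0)"

definition soV :: "(sob \<Rightarrow> complex) set" where
  "soV = {x. finite {b. x b \<noteq> 0}}"

definition lie :: "(sob \<Rightarrow> complex) \<Rightarrow> (sob \<Rightarrow> complex) \<Rightarrow> sob \<Rightarrow> complex" where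
  "lie x y = (\<lambda>z. \<Sum>a\<in>{a. x a \<noteq> 0}. \<Sum>b\<in>{b. y b \<noteq> 0}. x a * y b * br a b z)"

fun deg :: "sob \<Rightarrow> real" where
  "deg (SL n) = of_int n"
| "deg (SM n) = of_int n"
| "deg (SN n) = of_int n"
| "deg (SY n) = of_int n + 1/2"
| "deg CL = 0"
| "deg CLN = 0"
| "deg CN = 0"

definition piece :: "real \<Rightarrow> (sob \<Rightarrow> complex) set" where
  "piece h = {x \<in> soV. \<forall>b. x b \<noteq> 0 \<longrightarrow> deg b = h}"

definition linear_map_so :: "((sob \<Rightarrow> complex) \<Rightarrow> (sob \<Rightarrow> complex)) \<Rightarrow> bool" where
  "linear_map_so \<phi> \<longleftrightarrow> (\<forall>x\<in>soV. \<phi> x \<in> soV)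
     \<and> (\<forall>x\<in>soV. \<forall>y\<in>soV. \<phi> (\<lambda>z. x z + y z) = (\<lambda>z. \<phi> x z + \<phi> y z))
     \<and> (\<forall>c. \<forall>x\<in>soV. \<phi> (\<lambda>z. c * x z) = (\<lambda>z. c * \<phi> x z))"

definition half_derivation :: "((sob \<Rightarrow> complex) \<Rightarrow> (sob \<Rightarrow> complex)) \<Rightarrow> bool" where
  "half_derivation \<phi> \<longleftrightarrow> linear_map_so \<phi> \<and>
     (\<forall>x\<in>soV. \<forall>y\<in>soV. \<phi> (lie x y) = (\<lambda>z. (lie (\<phi> x) y z + lie x (\<phi> y) z) / 2))"

definition has_degree :: "((sob \<Rightarrow> complex) \<Rightarrow> (sob \<Rightarrow> complex)) \<Rightarrow> real \<Rightarrow> bool" where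
  "has_degree \<phi> g \<longleftrightarrow> (\<forall>h. 2 * h \<in> \<int> \<longrightarrow> \<phi> ` piece h \<subseteq> piece (g + h))"

definition Delta :: "real \<Rightarrow> ((sob \<Rightarrow> complex) \<Rightarrow> (sob \<Rightarrow> complex)) set" where
  "Delta g = {\<phi>. half_derivation \<phi> \<and> has_degree \<phi> g}"

end

theory Submission
  imports Defs
begin

(* Applying the 1/2-derivation identity to [L_0, x] = deg(x) x shows that a 1/2-derivation
   \<phi> of degree g satisfies (deg x - g) \<phi>(x) = [\<phi>(L_0), x] for every homogeneous x, and
   \<phi>(L_0) lies in the finite-dimensional component of degree g.  Evaluating this identity
   and the 1/2-derivation identity on a few basis brackets kills \<phi>(L_0) when g \<noteq> 0, and
   reduces it to a L_0 plus central terms when g = 0; so \<phi> is 0, resp. a Id, on all basis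
   vectors of degree \<noteq> g.  Each basis vector of degree g is a combination of brackets of basis
   vectors of other degrees, and the 1/2-derivation identity carries the scalar over to it. *)

definition basis_vec :: "sob \<Rightarrow> sob \<Rightarrow> complex" where
  "basis_vec b = (\<lambda>z. if z = b then 1 else 0)"

lemma support_basis_vec: "{w. basis_vec b w \<noteq> 0} = {b}"
  by (auto simp: basis_vec_def)

lemma basis_vec_in_soV: "basis_vec b \<in> soV"
  by (simp add: soV_def support_basis_vec)

lemma basis_vec_in_piece: "basis_vec b \<in> piece (deg b)"
  unfolding piece_def using basis_vec_in_soV by (auto simp: basis_vec_def)

lemma smult_in_soV: "x \<in> soV \<Longrightarrow> (\<lambda>z. d * x z) \<in> soV"
  unfolding soV_def by (auto elim: finite_subset[rotated])

lemma sum_smult_basis_vec: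
  assumes "finite S" "{w. v w \<noteq> 0} \<subseteq> S"
  shows "(\<Sum>w\<in>S. v w * basis_vec w z) = v z"
proof -
  have "(\<Sum>w\<in>S. v w * basis_vec w z) = (\<Sum>w\<in>S. if w = z then v z else 0)"
    by (rule sum.cong) (auto simp: basis_vec_def)
  also have "\<dots> = v z"
    using assms by auto
  finally show ?thesis .
qed

lemma lie_basis_vec_right:
  assumes "finite W" "{w. v w \<noteq> 0} \<subseteq> W"
  shows "lie v (basis_vec b) z = (\<Sum>w\<in>W. v w * br w b z)"
proof -
  have "lie v (basis_vec b) z = (\<Sum>a\<in>{a. v a \<noteq> 0}. v a * br a b z)"
    unfolding lie_def support_basis_vec by (simp add: basis_vec_def)
  also have "\<dots> = (\<Sum>w\<in>W. v w * br w b z)"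
    by (rule sum.mono_neutral_left) (use assms in auto)
  finally show ?thesis .
qed

lemma lie_basis_vec_left:
  assumes "finite W" "{w. v w \<noteq> 0} \<subseteq> W"
  shows "lie (basis_vec a) v z = (\<Sum>w\<in>W. v w * br a w z)"
proof -
  have "lie (basis_vec a) v z = (\<Sum>b\<in>{b. v b \<noteq> 0}. v b * br a b z)"
    unfolding lie_def support_basis_vec by (simp add: basis_vec_def)
  also have "\<dots> = (\<Sum>w\<in>W. v w * br a w z)"
    by (rule sum.mono_neutral_left) (use assms in auto)
  finally show ?thesis .
qed

lemma lie_basis_vec_basis_vec: "lie (basis_vec a) (basis_vec b) = br a b"
proof
  fix z show "lie (basis_vec a) (basis_vec b) z = br a b z"
    using lie_basis_vec_right[of "{a}" "basis_vec a" b z] by (simp add: support_basis_vec basis_vec_def)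
qed

lemma lie_smult_left: "lie (\<lambda>z. c * x z) y = (\<lambda>z. c * lie x y z)"
proof (cases "c = 0")
  case False
  then have "{a. c * x a \<noteq> 0} = {a. x a \<noteq> 0}" by auto
  then show ?thesis unfolding lie_def by (simp add: sum_distrib_left mult.assoc)
qed (simp add: lie_def)

lemma lie_smult_right: "lie x (\<lambda>z. c * y z) = (\<lambda>z. c * lie x y z)"
proof (cases "c = 0")
  case False
  then have "{a. c * y a \<noteq> 0} = {a. y a \<noteq> 0}" by auto
  then show ?thesis unfolding lie_def by (simp add: sum_distrib_left algebra_simps)
qed (simp add: lie_def)

lemma br_SL0: "br (SL 0) w = (\<lambda>z. complex_of_real (deg w) * basis_vec w z)"
  by (cases w) (auto simp: basis_vec_def sv_def fun_eq_iff)

lemma br_central: "w \<in> {CL, CLN, CN} \<Longrightarrow> br w v = (\<lambda>z. 0)"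
  by (cases v) auto

lemma of_int_neq_of_int_add_half: "real_of_int k \<noteq> real_of_int n + 1/2"
proof
  assume "real_of_int k = real_of_int n + 1/2"
  then have "real_of_int (2*n + 1) = real_of_int (2*k)" by simp
  then have "2*n + 1 = 2*k" by linarith
  then show False by presburger
qed

lemma deg_eq_of_int_iff:
  "deg w = real_of_int k \<longleftrightarrow> w \<in> {SL k, SM k, SN k} \<or> (k = 0 \<and> w \<in> {CL, CLN, CN})"
  using of_int_neq_of_int_add_half[THEN not_sym] by (cases w) auto

lemma deg_eq_of_int_add_half_iff: "deg w = real_of_int k + 1/2 \<longleftrightarrow> w = SY k"
  using of_int_neq_of_int_add_half[of _ k] of_int_neq_of_int_add_half[of 0 k]
  by (cases w) auto

lemma two_deg_in_Ints: "2 * deg w \<in> \<int>"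
  by (cases w) auto

lemma support_piece: "v \<in> piece h \<Longrightarrow> {w. v w \<noteq> 0} \<subseteq> {w. deg w = h}"
  by (auto simp: piece_def)

lemma finite_support_piece: "v \<in> piece h \<Longrightarrow> finite {w. v w \<noteq> 0}"
  by (auto simp: piece_def soV_def)

lemma lie_SL0_piece:
  assumes "v \<in> piece h"
  shows "lie (basis_vec (SL 0)) v z = complex_of_real h * v z"
proof -
  note fin = finite_support_piece[OF assms]
  have "lie (basis_vec (SL 0)) v z = (\<Sum>w\<in>{w. v w \<noteq> 0}. v w * br (SL 0) w z)"
    by (rule lie_basis_vec_left[OF fin]) simp
  also have "\<dots> = (\<Sum>w\<in>{w. v w \<noteq> 0}. complex_of_real h * (v w * basis_vec w z))"
    by (rule sum.cong) (use support_piece[OF assms] in \<open>auto simp: br_SL0\<close>)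
  also have "\<dots> = complex_of_real h * v z"
    by (simp add: sum_distrib_left[symmetric] sum_smult_basis_vec[OF fin])
  finally show ?thesis .
qed

lemma linear_map_so_eq_smult:
  assumes lin: "linear_map_so \<phi>" and basis: "\<And>b. \<phi> (basis_vec b) = (\<lambda>z. c * basis_vec b z)"
    and "x \<in> soV"
  shows "\<phi> x = (\<lambda>z. c * x z)"
proof -
  have add: "\<And>x y. x \<in> soV \<Longrightarrow> y \<in> soV \<Longrightarrow>
      \<phi> (\<lambda>z. x z + y z) = (\<lambda>z. \<phi> x z + \<phi> y z)"
   and smult: "\<And>d x. x \<in> soV \<Longrightarrow> \<phi> (\<lambda>z. d * x z) = (\<lambda>z. d * \<phi> x z)"
    using lin unfolding linear_map_so_def by auto
  have on_finite_support: "\<phi> x = (\<lambda>z. c * x z)" if "finite S" "{w. x w \<noteq> 0} \<subseteq> S" for S x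
    using that
  proof (induction S arbitrary: x rule: finite_induct)
    case empty
    then have "x = (\<lambda>z. 0 * basis_vec CL z)" by auto
    then show ?case using smult[OF basis_vec_in_soV, of 0 CL] by simp
  next
    case (insert b S)
    define x' where "x' = x(b := 0)"
    have x'_support: "{w. x' w \<noteq> 0} \<subseteq> S" using insert.prems by (auto simp: x'_def)
    have "x' \<in> soV" unfolding soV_def using x'_support insert.hyps(1) finite_subset by auto
    have x_split: "x = (\<lambda>z. x' z + x b * basis_vec b z)"
      by (auto simp: x'_def basis_vec_def fun_eq_iff)
    have "\<phi> x = (\<lambda>z. \<phi> x' z + \<phi> (\<lambda>z. x b * basis_vec b z) z)"
      by (subst x_split, rule add) (use \<open>x' \<in> soV\<close> smult_in_soV basis_vec_in_soV in auto)
    also have "\<dots> = (\<lambda>z. c * (x' z + x b * basis_vec b z))"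
      using insert.IH[OF x'_support] smult[OF basis_vec_in_soV, of "x b" b] basis[of b]
      by (simp add: algebra_simps)
    finally show ?case by (simp add: fun_eq_iff x'_def basis_vec_def)
  qed
  show ?thesis
    using on_finite_support[of "{w. x w \<noteq> 0}" x] \<open>x \<in> soV\<close> unfolding soV_def by simp
qed

lemma smult_in_Delta0: "(\<lambda>x z. c * x z) \<in> Delta 0"
proof -
  have "linear_map_so (\<lambda>x z. c * x z)"
    unfolding linear_map_so_def using smult_in_soV by (auto simp: algebra_simps)
  then have "half_derivation (\<lambda>x z. c * x z)"
    unfolding half_derivation_def by (simp add: lie_smult_left lie_smult_right)
  moreover have "has_degree (\<lambda>x z. c * x z) 0"
    unfolding has_degree_def piece_def using smult_in_soV by auto
  ultimately show ?thesis unfolding Delta_def by simp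
qed

locale half_derivation_of_degree =
  fixes \<phi> :: "(sob \<Rightarrow> complex) \<Rightarrow> sob \<Rightarrow> complex" and g :: real
  assumes half_derivation: "half_derivation \<phi>" and degree: "has_degree \<phi> g"
begin

abbreviation phi_L0 :: "sob \<Rightarrow> complex" where
  "phi_L0 \<equiv> \<phi> (basis_vec (SL 0))"

lemma linear: "linear_map_so \<phi>"
  using half_derivation by (simp add: half_derivation_def)

lemma phi_smult: "x \<in> soV \<Longrightarrow> \<phi> (\<lambda>z. d * x z) = (\<lambda>z. d * \<phi> x z)"
  using linear unfolding linear_map_so_def by auto

lemma phi_add: "x \<in> soV \<Longrightarrow> y \<in> soV \<Longrightarrow> \<phi> (\<lambda>z. x z + y z) = (\<lambda>z. \<phi> x z + \<phi> y z)"
  using linear unfolding linear_map_so_def by auto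

lemma phi_zero: "\<phi> (\<lambda>z. 0) = (\<lambda>z. 0)"
  using phi_smult[OF basis_vec_in_soV, of 0 CL] by simp

lemma phi_smult_basis_vec: "\<phi> (\<lambda>z. d * basis_vec b z) = (\<lambda>z. d * \<phi> (basis_vec b) z)"
  using phi_smult[OF basis_vec_in_soV] .

lemma phi_lincomb_basis_vec:
  "\<phi> (\<lambda>z. d1 * basis_vec p z + d2 * basis_vec q z)
     = (\<lambda>z. d1 * \<phi> (basis_vec p) z + d2 * \<phi> (basis_vec q) z)"
  using phi_add[OF smult_in_soV[OF basis_vec_in_soV] smult_in_soV[OF basis_vec_in_soV], of d1 p d2 q]
  by (simp add: phi_smult_basis_vec)

lemma phi_br:
  "\<phi> (br a b) z = (lie (\<phi> (basis_vec a)) (basis_vec b) z + lie (basis_vec a) (\<phi> (basis_vec b)) z) / 2"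
proof -
  have "\<phi> (lie (basis_vec a) (basis_vec b))
      = (\<lambda>z. (lie (\<phi> (basis_vec a)) (basis_vec b) z + lie (basis_vec a) (\<phi> (basis_vec b)) z) / 2)"
    using half_derivation basis_vec_in_soV unfolding half_derivation_def by blast
  then show ?thesis unfolding lie_basis_vec_basis_vec by simp
qed

lemma phi_basis_vec_in_piece: "\<phi> (basis_vec b) \<in> piece (g + deg b)"
  using degree basis_vec_in_piece two_deg_in_Ints unfolding has_degree_def by blast

lemma support_phi_basis_vec_of_int:
  assumes "g + deg b = real_of_int k" "k \<noteq> 0"
  shows "{w. \<phi> (basis_vec b) w \<noteq> 0} \<subseteq> {SL k, SM k, SN k}"
  using support_piece[OF phi_basis_vec_in_piece[of b]] assms deg_eq_of_int_iff[of _ k] by auto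

lemma support_phi_basis_vec_zero:
  assumes "g + deg b = 0"
  shows "{w. \<phi> (basis_vec b) w \<noteq> 0} \<subseteq> {SL 0, SM 0, SN 0, CL, CLN, CN}"
  using support_piece[OF phi_basis_vec_in_piece[of b]] assms deg_eq_of_int_iff[of _ 0] by auto

lemma support_phi_basis_vec_half:
  assumes "g + deg b = real_of_int k + 1/2"
  shows "{w. \<phi> (basis_vec b) w \<noteq> 0} \<subseteq> {SY k}"
  using support_piece[OF phi_basis_vec_in_piece[of b]] assms deg_eq_of_int_add_half_iff[of _ k]
  by auto

lemma lie_phi_L0:
  "lie phi_L0 (basis_vec x) z = complex_of_real (deg x - g) * \<phi> (basis_vec x) z"
proof -
  have "\<phi> (br (SL 0) x) = (\<lambda>z. complex_of_real (deg x) * \<phi> (basis_vec x) z)"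
    unfolding br_SL0 by (rule phi_smult_basis_vec)
  then have "complex_of_real (deg x) * \<phi> (basis_vec x) z
      = (lie phi_L0 (basis_vec x) z + complex_of_real (g + deg x) * \<phi> (basis_vec x) z) / 2"
    using phi_br[of "SL 0" x z] lie_SL0_piece[OF phi_basis_vec_in_piece[of x]] by simp
  then show ?thesis by (simp add: field_simps)
qed

lemma phi_br_scalar:
  assumes "\<phi> (basis_vec p) = (\<lambda>z. c * basis_vec p z)" "\<phi> (basis_vec q) = (\<lambda>z. c * basis_vec q z)"
  shows "\<phi> (br p q) z = c * br p q z"
proof -
  have "{w. c * basis_vec p w \<noteq> 0} \<subseteq> {p}" "{w. c * basis_vec q w \<noteq> 0} \<subseteq> {q}"
    by (auto simp: basis_vec_def)
  then have "lie (\<lambda>z. c * basis_vec p z) (basis_vec q) z = c * br p q z"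
    and "lie (basis_vec p) (\<lambda>z. c * basis_vec q z) z = c * br p q z"
    using lie_basis_vec_right[of "{p}" _ q z] lie_basis_vec_left[of "{q}" _ p z]
    by (simp_all add: basis_vec_def)
  then show ?thesis using phi_br[of p q z] assms by simp
qed

lemma phi_scalar_from_br2:
  assumes "\<phi> (basis_vec p) = (\<lambda>z. c * basis_vec p z)" "\<phi> (basis_vec q) = (\<lambda>z. c * basis_vec q z)"
    and "\<phi> (basis_vec r) = (\<lambda>z. c * basis_vec r z)"
    and "br p q = (\<lambda>z. d * basis_vec r z + d' * basis_vec r' z)" "d' \<noteq> 0"
  shows "\<phi> (basis_vec r') = (\<lambda>z. c * basis_vec r' z)"
proof
  fix z
  have "d * (c * basis_vec r z) + d' * \<phi> (basis_vec r') z = c * (d * basis_vec r z + d' * basis_vec r' z)"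
    using phi_br_scalar[OF assms(1,2), of z] assms(3)
    unfolding assms(4) phi_lincomb_basis_vec by simp
  then have "d' * \<phi> (basis_vec r') z = d' * (c * basis_vec r' z)"
    by (simp add: algebra_simps)
  then show "\<phi> (basis_vec r') z = c * basis_vec r' z"
    using \<open>d' \<noteq> 0\<close> by simp
qed

lemma phi_scalar_from_br:
  assumes "\<phi> (basis_vec p) = (\<lambda>z. c * basis_vec p z)" "\<phi> (basis_vec q) = (\<lambda>z. c * basis_vec q z)"
    and "br p q = (\<lambda>z. d * basis_vec r z)" "d \<noteq> 0"
  shows "\<phi> (basis_vec r) = (\<lambda>z. c * basis_vec r z)"
  by (rule phi_scalar_from_br2[OF assms(1,2) assms(1), of 0]) (use assms(3,4) in auto)

end

locale half_derivation_of_nonzero_int_degree = half_derivation_of_degree +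
  fixes G :: int
  assumes degree_eq: "g = real_of_int G" and degree_nonzero: "G \<noteq> 0"
begin

lemma support_phi_L0: "{w. phi_L0 w \<noteq> 0} \<subseteq> {SL G, SM G, SN G}"
  using support_phi_basis_vec_of_int[of "SL 0" G] degree_eq degree_nonzero by simp

lemma lie_phi_L0_expand:
  "complex_of_real (deg x - g) * \<phi> (basis_vec x) z =
     phi_L0 (SL G) * br (SL G) x z + phi_L0 (SM G) * br (SM G) x z + phi_L0 (SN G) * br (SN G) x z"
  using lie_phi_L0[of x z] lie_basis_vec_right[OF _ support_phi_L0] by (simp add: add.assoc)

lemma phi_L0_SM: "phi_L0 (SM G) = 0"
proof -
  have phi_N0: "complex_of_int G * \<phi> (basis_vec (SN 0)) (SM G) = 2 * phi_L0 (SM G)"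
    using lie_phi_L0_expand[of "SN 0" "SM G"] degree_eq by (simp add: sv_def)
  have "complex_of_int G * \<phi> (basis_vec (SL (2*G))) (SM (3*G)) = complex_of_int G * (- phi_L0 (SM G))"
    using lie_phi_L0_expand[of "SL (2*G)" "SM (3*G)"] degree_eq by (simp add: sv_def)
  then have phi_L2G: "\<phi> (basis_vec (SL (2*G))) (SM (3*G)) = - phi_L0 (SM G)"
    using degree_nonzero by (metis mult_left_cancel of_int_eq_0_iff)
  \<comment> \<open>\<open>[N_0, L_2G] = 0\<close>, so the 1/2-derivation identity relates the two values above.\<close>
  have "br (SN 0) (SL (2*G)) = (\<lambda>z. 0)"
    using degree_nonzero by (auto simp: fun_eq_iff)
  then have "0 = (lie (\<phi> (basis_vec (SN 0))) (basis_vec (SL (2*G))) (SM (3*G))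
                 + lie (basis_vec (SN 0)) (\<phi> (basis_vec (SL (2*G)))) (SM (3*G))) / 2"
    using phi_br[of "SN 0" "SL (2*G)" "SM (3*G)"] by (simp add: phi_zero)
  also have "lie (\<phi> (basis_vec (SN 0))) (basis_vec (SL (2*G))) (SM (3*G))
      = - complex_of_int G * \<phi> (basis_vec (SN 0)) (SM G)"
    using lie_basis_vec_right[OF _ support_phi_basis_vec_of_int[of "SN 0" G], of "SL (2*G)" "SM (3*G)"]
      degree_eq degree_nonzero by (simp add: sv_def)
  also have "lie (basis_vec (SN 0)) (\<phi> (basis_vec (SL (2*G)))) (SM (3*G))
      = 2 * \<phi> (basis_vec (SL (2*G))) (SM (3*G))"
    using lie_basis_vec_left[OF _ support_phi_basis_vec_of_int[of "SL (2*G)" "3*G"], of "SN 0" "SM (3*G)"]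
      degree_eq degree_nonzero by (simp add: sv_def)
  finally show ?thesis using phi_N0 phi_L2G by simp
qed

lemma phi_L0_SL_SN_relation:
  assumes "n \<noteq> 0" "n \<noteq> G" "n + G \<noteq> 0"
  shows "of_int n * of_int G * phi_L0 (SL G) + 2 * (of_int G + of_int n) * phi_L0 (SN G) = 0"
proof -
  define VM where "VM = \<phi> (basis_vec (SM n)) (SM (n+G))"
  define VM0 where "VM0 = \<phi> (basis_vec (SM 0)) (SM G)"
  define VN where "VN = \<phi> (basis_vec (SN n)) (SN (n+G))"
  have VM: "(of_int n - of_int G) * VM = of_int n * phi_L0 (SL G) + 2 * phi_L0 (SN G)"
    using lie_phi_L0_expand[of "SM n" "SM (n+G)"] degree_eq assms
    unfolding VM_def by (simp add: sv_def add.commute)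
  have VM0: "- of_int G * VM0 = 2 * phi_L0 (SN G)"
    using lie_phi_L0_expand[of "SM 0" "SM G"] degree_eq unfolding VM0_def by (simp add: sv_def)
  have VN: "(of_int n - of_int G) * VN = of_int n * phi_L0 (SL G)"
    using lie_phi_L0_expand[of "SN n" "SN (n+G)"] degree_eq assms
    unfolding VN_def by (simp add: sv_def add.commute)
  have "br (SM 0) (SN n) = (\<lambda>z. (-2) * basis_vec (SM n) z)"
    by (auto simp: sv_def basis_vec_def fun_eq_iff)
  then have "\<phi> (br (SM 0) (SN n)) = (\<lambda>z. (-2) * \<phi> (basis_vec (SM n)) z)"
    by (simp only: phi_smult_basis_vec)
  then have "(-2) * VM = (lie (\<phi> (basis_vec (SM 0))) (basis_vec (SN n)) (SM (n+G))
                        + lie (basis_vec (SM 0)) (\<phi> (basis_vec (SN n))) (SM (n+G))) / 2"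
    using phi_br[of "SM 0" "SN n" "SM (n+G)"] unfolding VM_def by simp
  also have "lie (\<phi> (basis_vec (SM 0))) (basis_vec (SN n)) (SM (n+G)) = -2 * VM0"
    using lie_basis_vec_right[OF _ support_phi_basis_vec_of_int[of "SM 0" G], of "SN n" "SM (n+G)"]
      degree_eq degree_nonzero unfolding VM0_def by (simp add: sv_def add.commute)
  also have "lie (basis_vec (SM 0)) (\<phi> (basis_vec (SN n))) (SM (n+G)) = -2 * VN"
    using lie_basis_vec_left[OF _ support_phi_basis_vec_of_int[of "SN n" "n+G"], of "SM 0" "SM (n+G)"]
      degree_eq assms unfolding VN_def by (simp add: sv_def)
  finally have "2 * VM = VM0 + VN" by algebra
  then show ?thesis using VM VM0 VN by algebra
qed

lemma phi_L0_SL_SN: "phi_L0 (SL G) = 0 \<and> phi_L0 (SN G) = 0"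
proof -
  have G: "(of_int G :: complex) \<noteq> 0" using degree_nonzero by simp
  have "of_int G * (2 * of_int G * phi_L0 (SL G) + 6 * phi_L0 (SN G)) = 0"
    using phi_L0_SL_SN_relation[of "2*G"] degree_nonzero by (simp add: algebra_simps)
  then have two: "2 * of_int G * phi_L0 (SL G) + 6 * phi_L0 (SN G) = 0" using G by simp
  have "of_int G * (3 * of_int G * phi_L0 (SL G) + 8 * phi_L0 (SN G)) = 0"
    using phi_L0_SL_SN_relation[of "3*G"] degree_nonzero by (simp add: algebra_simps)
  then have three: "3 * of_int G * phi_L0 (SL G) + 8 * phi_L0 (SN G) = 0" using G by simp
  have "phi_L0 (SN G) = 0" using two three by algebra
  then show ?thesis using two G by simp
qed

lemma phi_L0_eq_0: "phi_L0 = (\<lambda>z. 0)"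
  using support_phi_L0 phi_L0_SL_SN phi_L0_SM by blast

lemma phi_basis_vec_off_degree: "deg x \<noteq> g \<Longrightarrow> \<phi> (basis_vec x) = (\<lambda>z. 0 * basis_vec x z)"
  using lie_phi_L0[of x] by (auto simp: phi_L0_eq_0 lie_def)

lemma phi_basis_vec_eq_0: "\<phi> (basis_vec x) = (\<lambda>z. 0 * basis_vec x z)"
proof (cases "deg x = g")
  case True
  have other_degrees: "deg (SL (2*G)) \<noteq> g" "deg (SL (-G)) \<noteq> g" "deg (SN (2*G)) \<noteq> g"
      "deg (SM (-G)) \<noteq> g" "deg (SN (-G)) \<noteq> g"
    using degree_eq degree_nonzero by auto
  have "x \<in> {SL G, SM G, SN G}"
    using True deg_eq_of_int_iff[of x G] degree_eq degree_nonzero by auto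
  moreover have "\<phi> (basis_vec (SL G)) = (\<lambda>z. 0 * basis_vec (SL G) z)"
    by (rule phi_scalar_from_br[of "SL (2*G)" _ "SL (-G)" "of_int (-3*G)"])
      (use other_degrees degree_nonzero phi_basis_vec_off_degree in \<open>auto simp: basis_vec_def fun_eq_iff\<close>)
  moreover have "\<phi> (basis_vec (SM G)) = (\<lambda>z. 0 * basis_vec (SM G) z)"
    by (rule phi_scalar_from_br[of "SN (2*G)" _ "SM (-G)" 2])
      (use other_degrees phi_basis_vec_off_degree in \<open>auto simp: basis_vec_def sv_def fun_eq_iff\<close>)
  moreover have "\<phi> (basis_vec (SN G)) = (\<lambda>z. 0 * basis_vec (SN G) z)"
    by (rule phi_scalar_from_br[of "SL (2*G)" _ "SN (-G)" "of_int (-G)"])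
      (use other_degrees degree_nonzero phi_basis_vec_off_degree in \<open>auto simp: basis_vec_def fun_eq_iff\<close>)
  ultimately show ?thesis by auto
qed (rule phi_basis_vec_off_degree)

end

locale half_derivation_of_degree_zero = half_derivation_of_degree \<phi> 0 for \<phi>
begin

lemma support_phi_L0: "{w. phi_L0 w \<noteq> 0} \<subseteq> {SL 0, SM 0, SN 0, CL, CLN, CN}"
  using support_phi_basis_vec_zero[of "SL 0"] by simp

lemma lie_phi_L0_expand:
  "complex_of_real (deg x) * \<phi> (basis_vec x) z =
     phi_L0 (SL 0) * br (SL 0) x z + phi_L0 (SM 0) * br (SM 0) x z + phi_L0 (SN 0) * br (SN 0) x z"
  using lie_phi_L0[of x z] lie_basis_vec_right[OF _ support_phi_L0, of x z]
  by (simp add: br_central add.assoc)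

lemma phi_L0_SN: "phi_L0 (SN 0) = 0"
proof -
  define U0 where "U0 = \<phi> (basis_vec (SY 0)) (SY 0)"
  define U1 where "U1 = \<phi> (basis_vec (SY 1)) (SY 1)"
  define U2 where "U2 = \<phi> (basis_vec (SM 2)) (SM 2)"
  have U0: "U0 = phi_L0 (SL 0) + 2 * phi_L0 (SN 0)"
    using lie_phi_L0_expand[of "SY 0" "SY 0"] unfolding U0_def by (simp add: sv_def field_simps)
  have U1: "3 * U1 = 3 * phi_L0 (SL 0) + 2 * phi_L0 (SN 0)"
    using lie_phi_L0_expand[of "SY 1" "SY 1"] unfolding U1_def by (simp add: sv_def field_simps)
  have U2: "2 * U2 = 2 * phi_L0 (SL 0) + 2 * phi_L0 (SN 0)"
    using lie_phi_L0_expand[of "SM 2" "SM 2"] unfolding U2_def by (simp add: sv_def field_simps)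
  have "br (SY 0) (SY 1) = (\<lambda>z. (-1) * basis_vec (SM 2) z)"
    by (auto simp: sv_def basis_vec_def fun_eq_iff)
  then have "\<phi> (br (SY 0) (SY 1)) = (\<lambda>z. (-1) * \<phi> (basis_vec (SM 2)) z)"
    by (simp only: phi_smult_basis_vec)
  then have "- U2 = (lie (\<phi> (basis_vec (SY 0))) (basis_vec (SY 1)) (SM 2)
                   + lie (basis_vec (SY 0)) (\<phi> (basis_vec (SY 1))) (SM 2)) / 2"
    using phi_br[of "SY 0" "SY 1" "SM 2"] unfolding U2_def by simp
  also have "lie (\<phi> (basis_vec (SY 0))) (basis_vec (SY 1)) (SM 2) = - U0"
    using lie_basis_vec_right[OF _ support_phi_basis_vec_half[of "SY 0" 0], of "SY 1" "SM 2"]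
    unfolding U0_def by (simp add: sv_def)
  also have "lie (basis_vec (SY 0)) (\<phi> (basis_vec (SY 1))) (SM 2) = - U1"
    using lie_basis_vec_left[OF _ support_phi_basis_vec_half[of "SY 1" 1], of "SY 0" "SM 2"]
    unfolding U1_def by (simp add: sv_def)
  finally have "2 * U2 = U0 + U1" by (simp add: field_simps)
  then show ?thesis using U0 U1 U2 by algebra
qed

lemma phi_L0_SM: "phi_L0 (SM 0) = 0"
proof -
  define V1 where "V1 = \<phi> (basis_vec (SN 3)) (SM 3)"
  define V2 where "V2 = \<phi> (basis_vec (SL 1)) (SM 1)"
  define V3 where "V3 = \<phi> (basis_vec (SN 2)) (SM 2)"
  have V1: "3 * V1 = -2 * phi_L0 (SM 0)"
    using lie_phi_L0_expand[of "SN 3" "SM 3"] unfolding V1_def by (simp add: sv_def field_simps)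
  have V2: "V2 = 0"
    using lie_phi_L0_expand[of "SL 1" "SM 1"] unfolding V2_def by (simp add: sv_def field_simps)
  have V3: "V3 = - phi_L0 (SM 0)"
    using lie_phi_L0_expand[of "SN 2" "SM 2"] unfolding V3_def by (simp add: sv_def field_simps)
  have "br (SL 1) (SN 2) = (\<lambda>z. 2 * basis_vec (SN 3) z)"
    by (auto simp: sv_def basis_vec_def fun_eq_iff)
  then have "\<phi> (br (SL 1) (SN 2)) = (\<lambda>z. 2 * \<phi> (basis_vec (SN 3)) z)"
    by (simp only: phi_smult_basis_vec)
  then have "2 * V1 = (lie (\<phi> (basis_vec (SL 1))) (basis_vec (SN 2)) (SM 3)
                     + lie (basis_vec (SL 1)) (\<phi> (basis_vec (SN 2))) (SM 3)) / 2"
    using phi_br[of "SL 1" "SN 2" "SM 3"] unfolding V1_def by simp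
  also have "lie (\<phi> (basis_vec (SL 1))) (basis_vec (SN 2)) (SM 3) = -2 * V2"
    using lie_basis_vec_right[OF _ support_phi_basis_vec_of_int[of "SL 1" 1], of "SN 2" "SM 3"]
    unfolding V2_def by (simp add: sv_def)
  also have "lie (basis_vec (SL 1)) (\<phi> (basis_vec (SN 2))) (SM 3) = 2 * V3"
    using lie_basis_vec_left[OF _ support_phi_basis_vec_of_int[of "SN 2" 2], of "SL 1" "SM 3"]
    unfolding V3_def by (simp add: sv_def)
  finally have "2 * V1 = - phi_L0 (SM 0)" using V2 V3 by simp
  then show ?thesis using V1 by algebra
qed

lemma phi_basis_vec_nonzero_degree:
  assumes "deg x \<noteq> 0"
  shows "\<phi> (basis_vec x) = (\<lambda>z. phi_L0 (SL 0) * basis_vec x z)"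
proof
  fix z
  have "complex_of_real (deg x) * \<phi> (basis_vec x) z = complex_of_real (deg x) * (phi_L0 (SL 0) * basis_vec x z)"
    using lie_phi_L0_expand[of x z] phi_L0_SN phi_L0_SM by (simp add: br_SL0)
  then show "\<phi> (basis_vec x) z = phi_L0 (SL 0) * basis_vec x z"
    using assms by simp
qed

lemma phi_basis_vec: "\<phi> (basis_vec x) = (\<lambda>z. phi_L0 (SL 0) * basis_vec x z)"
proof (cases "deg x = 0")
  case True
  note nonzero = phi_basis_vec_nonzero_degree
  have "x \<in> {SL 0, SM 0, SN 0, CL, CLN, CN}"
    using True deg_eq_of_int_iff[of x 0] by auto
  moreover have SL0: "\<phi> (basis_vec (SL 0)) = (\<lambda>z. phi_L0 (SL 0) * basis_vec (SL 0) z)"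
    by (rule phi_scalar_from_br[of "SL (-1)" _ "SL 1" 2])
      (use nonzero in \<open>auto simp: basis_vec_def fun_eq_iff\<close>)
  moreover have "\<phi> (basis_vec (SM 0)) = (\<lambda>z. phi_L0 (SL 0) * basis_vec (SM 0) z)"
    by (rule phi_scalar_from_br[of "SL (-1)" _ "SM 1" 1])
      (use nonzero in \<open>auto simp: basis_vec_def sv_def fun_eq_iff\<close>)
  moreover have SN0: "\<phi> (basis_vec (SN 0)) = (\<lambda>z. phi_L0 (SL 0) * basis_vec (SN 0) z)"
    by (rule phi_scalar_from_br[of "SL 1" _ "SN (-1)" "-1"])
      (use nonzero in \<open>auto simp: basis_vec_def fun_eq_iff\<close>)
  moreover have "\<phi> (basis_vec CN) = (\<lambda>z. phi_L0 (SL 0) * basis_vec CN z)"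
    by (rule phi_scalar_from_br[of "SN 1" _ "SN (-1)" "-1"])
      (use nonzero in \<open>auto simp: basis_vec_def sv_def fun_eq_iff\<close>)
  moreover have "\<phi> (basis_vec CLN) = (\<lambda>z. phi_L0 (SL 0) * basis_vec CLN z)"
    by (rule phi_scalar_from_br2[OF nonzero[of "SL 2"] nonzero[of "SN (-2)"]
        SN0, where d = "-2" and d' = 2])
      (auto simp: basis_vec_def fun_eq_iff)
  moreover have "\<phi> (basis_vec CL) = (\<lambda>z. phi_L0 (SL 0) * basis_vec CL z)"
    by (rule phi_scalar_from_br2[OF nonzero[of "SL 2"] nonzero[of "SL (-2)"]
        SL0, where d = "-4" and d' = "1/2"])
      (auto simp: basis_vec_def fun_eq_iff)
  ultimately show ?thesis by auto
qed (rule phi_basis_vec_nonzero_degree)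

end

theorem mainTheorem1:
  shows "(\<forall>\<phi>\<in>Delta 0. \<exists>c::complex. \<forall>x\<in>soV. \<phi> x = (\<lambda>z. c * x z))
       \<and> (\<forall>c::complex. (\<lambda>x z. c * x z) \<in> Delta 0)
       \<and> (\<forall>j::real. j \<in> \<int> \<and> j \<noteq> 0 \<longrightarrow> (\<forall>\<phi>\<in>Delta j. \<forall>x\<in>soV. \<phi> x = (\<lambda>z. 0)))"
proof (intro conjI allI ballI impI)
  fix \<phi> assume "\<phi> \<in> Delta 0"
  then interpret half_derivation_of_degree_zero \<phi>
    by unfold_locales (auto simp: Delta_def)
  show "\<exists>c::complex. \<forall>x\<in>soV. \<phi> x = (\<lambda>z. c * x z)"
    using linear_map_so_eq_smult[OF linear phi_basis_vec] by blast
next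
  fix c :: complex show "(\<lambda>x z. c * x z) \<in> Delta 0" by (rule smult_in_Delta0)
next
  fix j :: real and \<phi> x assume j: "j \<in> \<int> \<and> j \<noteq> 0" and "\<phi> \<in> Delta j" and "x \<in> soV"
  from j obtain G where G: "j = real_of_int G" "G \<noteq> 0" by (auto elim: Ints_cases)
  interpret half_derivation_of_nonzero_int_degree \<phi> j G
    by unfold_locales (use \<open>\<phi> \<in> Delta j\<close> G in \<open>auto simp: Delta_def\<close>)
  show "\<phi> x = (\<lambda>z. 0)"
    using linear_map_so_eq_smult[OF linear phi_basis_vec_eq_0 \<open>x \<in> soV\<close>] by simp
qed

end
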